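(* Let $P=\frac{1}{\sqrt2}\begin{bmatrix}1&1\\0&0\end{bmatrix}$ and $Q=\frac{1}{\sqrt2}\begin{bmatrix}0&0\\1&-1\end{bmatrix}$. For $\varphi=\begin{bmatrix}\alpha\\ \beta\end{bmatrix}\in\mathbb{C}^2$ with $|\alpha|^2+|\beta|^2=1$, define $\Psi^{(n)}_k(\varphi)\in\mathbb{C}^2$ ($n\in\mathbb{Z}_+$, $k\in\mathbb{Z}$) by $\Psi^{(0)}_0(\varphi)=\varphi$, $\Psi^{(0)}_k(\varphi)=0$ for $k\ne0$, and $\Psi^{(n+1)}_k(\varphi)=Q\Psi^{(n)}_{k-1}(\varphi)+P\Psi^{(n)}_{k+1}(\varphi)$, and let $X^\varphi_n$ be the $\mathbb{Z}$-valued random variable with $P(X^\varphi_n=k)=|\Psi^{(n)}_k(\varphi)|^2$ (Euclidean norm). Let $\Phi$ be the set of such unit vectors $\varphi$ and define $\Phi_\perp=\{\varphi=(\alpha,\beta)^t\in\Phi: |\alpha|=|\beta|,\ \alpha\bar\beta+\bar\alpha\beta=0\}$, $\Phi_s=\{\varphi\in\Phi: P(X^\varphi_n=k)=P(X^\varphi_n=-k)\text{ for all } n\in\mathbb{Z}_+,\ k\in\mathbb{Z}\}$, $\Phi_0=\{\varphi\in\Phi: E(X^\varphi_n)=0\text{ for all } n\in\mathbb{Z}_+\}$. Then $\Phi_\perp=\Phi_s=\Phi_0$.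
   Context: This is the one-dimensional Hadamard walk with Hadamard matrix $H=\frac{1}{\sqrt2}\begin{bmatrix}1&1\\1&-1\end{bmatrix}=P+Q$; the upper/lower component of $\Psi^{(n)}_k$ is the amplitude of left/right chirality at site $k$ at time $n$, and $\sum_k|\Psi^{(n)}_k(\varphi)|^2=1$. $\mathbb{Z}_+$ denotes the non-negative integers and $E(X^\varphi_n)=\sum_k k\,P(X^\varphi_n=k)$. (The paper realizes the walk on a large cycle of $2N+1$ sites; for the times considered this coincides with the walk on $\mathbb{Z}$.) *)

theory Defs
  imports "HOL-Analysis.Analysis"
begin

text \<open>Vectors in C^2 are pairs (upper component, lower component).
  A 2x2 matrix [[m11,m12],[m21,m22]] acts by matrix-vector product.\<close>

definition mat2_apply ::
  "complex \<Rightarrow> complex \<Rightarrow> complex \<Rightarrow> complex \<Rightarrow> complex \<times> complex \<Rightarrow> complex \<times> complex" where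
  "mat2_apply m11 m12 m21 m22 v = (m11 * fst v + m12 * snd v, m21 * fst v + m22 * snd v)"

definition Pmat :: "complex \<times> complex \<Rightarrow> complex \<times> complex" where
  "Pmat = mat2_apply (1 / sqrt 2) (1 / sqrt 2) 0 0"

definition Qmat :: "complex \<times> complex \<Rightarrow> complex \<times> complex" where
  "Qmat = mat2_apply 0 0 (1 / sqrt 2) (- 1 / sqrt 2)"

definition vadd :: "complex \<times> complex \<Rightarrow> complex \<times> complex \<Rightarrow> complex \<times> complex" where
  "vadd u v = (fst u + fst v, snd u + snd v)"

fun Psi :: "complex \<times> complex \<Rightarrow> nat \<Rightarrow> int \<Rightarrow> complex \<times> complex" where
  "Psi \<phi> 0 k = (if k = 0 then \<phi> else (0, 0))"
| "Psi \<phi> (Suc n) k = vadd (Qmat (Psi \<phi> n (k - 1))) (Pmat (Psi \<phi> n (k + 1)))"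

definition prob_walk :: "complex \<times> complex \<Rightarrow> nat \<Rightarrow> int \<Rightarrow> real" where
  "prob_walk \<phi> n k = (cmod (fst (Psi \<phi> n k)))\<^sup>2 + (cmod (snd (Psi \<phi> n k)))\<^sup>2"

definition expect_walk :: "complex \<times> complex \<Rightarrow> nat \<Rightarrow> real" where
  "expect_walk \<phi> n = (\<Sum>\<^sub>\<infinity>k::int. real_of_int k * prob_walk \<phi> n k)"

definition Phi :: "(complex \<times> complex) set" where
  "Phi = {\<phi>. (cmod (fst \<phi>))\<^sup>2 + (cmod (snd \<phi>))\<^sup>2 = 1}"

definition Phi_perp :: "(complex \<times> complex) set" where
  "Phi_perp = {\<phi> \<in> Phi. cmod (fst \<phi>) = cmod (snd \<phi>) \<and>
      fst \<phi> * cnj (snd \<phi>) + cnj (fst \<phi>) * snd \<phi> = 0}"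

definition Phi_s :: "(complex \<times> complex) set" where
  "Phi_s = {\<phi> \<in> Phi. \<forall>n k. prob_walk \<phi> n k = prob_walk \<phi> n (- k)}"

definition Phi_0 :: "(complex \<times> complex) set" where
  "Phi_0 = {\<phi> \<in> Phi. \<forall>n. expect_walk \<phi> n = 0}"

end

theory Submission
  imports Defs
begin

(* The reflection k \<mapsto> -k of the lattice exchanges the roles of P and Q; on the coin space it is
  realised by the unitary chirality_flip (\<alpha>, \<beta>) = (\<beta>, -\<alpha>), which intertwines P with -Q.
  Hence the walk started from chirality_flip \<phi> is, up to a global sign, the mirror image of the
  walk started from \<phi>.  The conditions defining Phi_perp say precisely that \<phi> is a unimodular
  multiple of chirality_flip \<phi>, so such walks are symmetric, and symmetric walks have mean zero.
  Conversely, the means at times 1 and 3 are -2 Re (\<alpha> cnj \<beta>) and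
  -2 Re (\<alpha> cnj \<beta>) + (|\<beta>|^2 - |\<alpha>|^2)/2; their vanishing gives back the two conditions. *)

definition cscale :: "complex \<Rightarrow> complex \<times> complex \<Rightarrow> complex \<times> complex" where
  "cscale c v = (c * fst v, c * snd v)"

definition chirality_flip :: "complex \<times> complex \<Rightarrow> complex \<times> complex" where
  "chirality_flip v = (snd v, - fst v)"

lemmas walk_step_defs = vadd_def Pmat_def Qmat_def mat2_apply_def

lemma Psi_cscale: "Psi (cscale c \<phi>) n k = cscale c (Psi \<phi> n k)"
  by (induction n arbitrary: k) (auto simp: cscale_def walk_step_defs algebra_simps)

lemma Psi_chirality_flip:
  "Psi (chirality_flip \<phi>) n k = cscale ((-1) ^ n) (chirality_flip (Psi \<phi> n (- k)))"
proof (induction n arbitrary: k)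
  case 0
  then show ?case by (simp add: cscale_def chirality_flip_def)
next
  case (Suc n)
  have reflected: "- (k - 1) = - k + 1" "- (k + 1) = - k - 1" by simp_all
  show ?case using Suc.IH[of "k - 1"] Suc.IH[of "k + 1"] unfolding reflected
    by (simp add: cscale_def chirality_flip_def walk_step_defs algebra_simps)
qed

lemma Psi_eq_0_outside: "int n < \<bar>k\<bar> \<Longrightarrow> Psi \<phi> n k = (0, 0)"
  by (induction n arbitrary: k) (auto simp: walk_step_defs)

lemma prob_walk_cscale: "cmod c = 1 \<Longrightarrow> prob_walk (cscale c \<phi>) n k = prob_walk \<phi> n k"
  by (simp only: prob_walk_def Psi_cscale) (simp add: cscale_def norm_mult)

lemma prob_walk_chirality_flip: "prob_walk (chirality_flip \<phi>) n k = prob_walk \<phi> n (- k)"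
  by (simp only: prob_walk_def Psi_chirality_flip)
    (simp add: cscale_def chirality_flip_def norm_mult norm_power)

lemma cscale_chirality_flip_if_perp:
  assumes "cmod a = cmod b" and "a * cnj b + cnj a * b = 0"
  obtains c where "cmod c = 1" and "(a, b) = cscale c (chirality_flip (a, b))"
proof (cases "b = 0")
  case True
  with assms(1) show ?thesis
    by (intro that[of 1]) (simp_all add: cscale_def chirality_flip_def)
next
  case False
  with assms(1) have "a \<noteq> 0" by auto
  have "(a * cnj b + cnj a * b) * b = 0"
    using assms(2) by simp
  moreover have "b * cnj b = a * cnj a"
    using assms(1) by (metis complex_norm_square)
  ultimately have "cnj a * (a * a + b * b) = 0"
    by (simp add: algebra_simps)
  with \<open>a \<noteq> 0\<close> have "a * a = - (b * b)" by (simp add: add_eq_0_iff2)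
  with False have "(a, b) = cscale (a / b) (chirality_flip (a, b))"
    by (simp add: cscale_def chirality_flip_def field_simps)
  moreover have "cmod (a / b) = 1"
    using assms(1) False by (simp add: norm_divide)
  ultimately show ?thesis using that by blast
qed

lemma Phi_perp_subset_Phi_s: "Phi_perp \<subseteq> Phi_s"
proof
  fix \<phi> assume perp: "\<phi> \<in> Phi_perp"
  obtain a b where ab: "\<phi> = (a, b)" by fastforce
  with perp obtain c where "cmod c = 1" and "\<phi> = cscale c (chirality_flip \<phi>)"
    using cscale_chirality_flip_if_perp by (auto simp: Phi_perp_def)
  then have "prob_walk \<phi> n k = prob_walk \<phi> n (- k)" for n k
    by (metis prob_walk_cscale prob_walk_chirality_flip)
  with perp show "\<phi> \<in> Phi_s" by (simp add: Phi_s_def Phi_perp_def)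
qed

lemma infsum_odd_eq_0:
  fixes f :: "'a::group_add \<Rightarrow> real"
  assumes "\<And>x. f (- x) = - f x"
  shows "infsum f UNIV = 0"
proof -
  have "infsum f UNIV = infsum f (range uminus)"
    by (metis surj_def minus_minus)
  also have "\<dots> = infsum (f \<circ> uminus) UNIV"
    by (rule infsum_reindex) simp
  also have "\<dots> = - infsum f UNIV"
    by (simp add: comp_def assms infsum_uminus)
  finally show ?thesis by simp
qed

lemma Phi_s_subset_Phi_0: "Phi_s \<subseteq> Phi_0"
proof
  fix \<phi> assume "\<phi> \<in> Phi_s"
  then have "prob_walk \<phi> n (- k) = prob_walk \<phi> n k" for n k
    unfolding Phi_s_def by (metis (mono_tags, lifting) mem_Collect_eq)
  then have "expect_walk \<phi> n = 0" for n
    unfolding expect_walk_def by (intro infsum_odd_eq_0) simp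
  with \<open>\<phi> \<in> Phi_s\<close> show "\<phi> \<in> Phi_0" by (simp add: Phi_0_def Phi_s_def)
qed

lemma expect_walk_eq_sum:
  "expect_walk \<phi> n = (\<Sum>k\<in>{- int n..int n}. real_of_int k * prob_walk \<phi> n k)"
proof -
  have "expect_walk \<phi> n = infsum (\<lambda>k. real_of_int k * prob_walk \<phi> n k) {- int n..int n}"
    unfolding expect_walk_def
    by (rule infsum_cong_neutral) (auto simp: prob_walk_def Psi_eq_0_outside)
  then show ?thesis by simp
qed

lemma Psi_one:
  "Psi (a, b) 1 (- 1) = ((a + b) / sqrt 2, 0)"
  "Psi (a, b) 1 1 = (0, (a - b) / sqrt 2)"
  by (simp_all add: walk_step_defs add_divide_distrib diff_divide_distrib)

lemma Psi_one_eq_0: "k \<noteq> - 1 \<Longrightarrow> k \<noteq> 1 \<Longrightarrow> Psi (a, b) 1 k = (0, 0)"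
  by (simp add: walk_step_defs)

lemma Psi_two:
  "Psi (a, b) 2 (- 2) = ((a + b) / 2, 0)"
  "Psi (a, b) 2 0 = ((a - b) / 2, (a + b) / 2)"
  "Psi (a, b) 2 2 = (0, (b - a) / 2)"
  "k \<noteq> - 2 \<Longrightarrow> k \<noteq> 0 \<Longrightarrow> k \<noteq> 2 \<Longrightarrow> Psi (a, b) 2 k = (0, 0)"
  by (simp_all only: numeral_2_eq_2 Psi.simps(2) One_nat_def[symmetric])
    (simp_all add: Psi_one Psi_one_eq_0 walk_step_defs field_simps flip: of_real_mult)

lemma Psi_three:
  "Psi (a, b) 3 (- 3) = ((a + b) / 2 / sqrt 2, 0)"
  "Psi (a, b) 3 (- 1) = (a / sqrt 2, (a + b) / 2 / sqrt 2)"
  "Psi (a, b) 3 1 = ((b - a) / 2 / sqrt 2, - b / sqrt 2)"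
  "Psi (a, b) 3 3 = (0, (a - b) / 2 / sqrt 2)"
  "Psi (a, b) 3 (- 2) = (0, 0)"
  "Psi (a, b) 3 2 = (0, 0)"
  by (simp_all only: numeral_3_eq_3 Psi.simps(2) numeral_2_eq_2[symmetric])
    (simp_all add: Psi_two walk_step_defs field_simps flip: of_real_mult)

lemma expect_walk_one: "expect_walk (a, b) 1 = - 2 * Re (a * cnj b)"
proof -
  have support: "{- int 1..int 1} = {- 1, 0, 1}" by auto
  show ?thesis unfolding expect_walk_eq_sum support
    by (simp add: prob_walk_def walk_step_defs norm_divide power_divide cmod_power2)
      (simp add: power2_eq_square field_simps)
qed

lemma expect_walk_three:
  "expect_walk (a, b) 3 = - 2 * Re (a * cnj b) + ((cmod b)\<^sup>2 - (cmod a)\<^sup>2) / 2"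
proof -
  have support: "{- int 3..int 3} = {- 3, - 2, - 1, 0, 1, 2, 3}" by auto
  show ?thesis unfolding expect_walk_eq_sum support
    by (simp add: prob_walk_def Psi_three norm_divide power_divide cmod_power2)
      (simp add: power2_eq_square field_simps)
qed

lemma Phi_0_subset_Phi_perp: "Phi_0 \<subseteq> Phi_perp"
proof
  fix \<phi> assume "\<phi> \<in> Phi_0"
  obtain a b where ab: "\<phi> = (a, b)" by fastforce
  with \<open>\<phi> \<in> Phi_0\<close>
  have mean1: "expect_walk (a, b) 1 = 0" and mean3: "expect_walk (a, b) 3 = 0"
    unfolding Phi_0_def by blast+
  from mean1 have re: "Re (a * cnj b) = 0"
    unfolding expect_walk_one by simp
  from mean3 have "(cmod a)\<^sup>2 = (cmod b)\<^sup>2"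
    unfolding expect_walk_three re by simp
  then have "cmod a = cmod b"
    by (simp add: power2_eq_iff_nonneg)
  moreover have "a * cnj b + cnj a * b = 0"
    using re by (simp add: complex_eq_iff)
  ultimately show "\<phi> \<in> Phi_perp"
    using \<open>\<phi> \<in> Phi_0\<close> ab by (simp add: Phi_perp_def Phi_0_def)
qed

theorem theorem2:
  shows "Phi_perp = Phi_s \<and> Phi_s = Phi_0"
  using Phi_perp_subset_Phi_s Phi_s_subset_Phi_0 Phi_0_subset_Phi_perp by blast

end
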